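(* Let $P,Q$ be nonzero coprime integers with $\Delta:=P^2-4Q\neq0$, such that $\alpha/\beta$ is not a root of unity, where $\alpha,\beta$ are the roots of $x^2-Px+Q$. Let $(U_n)$ be the Lucas sequence $U_n=(\alpha^n-\beta^n)/(\alpha-\beta)$. Let $n,k$ be positive integers with $n\ge k$. Then the number \[\left\{{n\atop k}\right\}_{\boldsymbol U}:=\frac{\mathrm{lcm}(U_n,U_{n-1},\dots,U_{n-k+1})}{\mathrm{lcm}(U_1,U_2,\dots,U_k)}\] is a positive integer, and it divides $\binom{n}{k}_{\boldsymbol U}$.
   Context: $U_0=0$, $U_1=1$, $U_{n+2}=PU_{n+1}-QU_n$. For $n\ge k\ge1$, $\binom{n}{k}_{\boldsymbol U}:=\frac{U_nU_{n-1}\cdots U_{n-k+1}}{U_1U_2\cdots U_k}$. *)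

theory Defs
  imports Complex_Main
begin

fun lucasU :: "int \<Rightarrow> int \<Rightarrow> nat \<Rightarrow> int" where
  "lucasU P Q 0 = 0"
| "lucasU P Q (Suc 0) = 1"
| "lucasU P Q (Suc (Suc n)) = P * lucasU P Q (Suc n) - Q * lucasU P Q n"

definition lucas_binom :: "int \<Rightarrow> int \<Rightarrow> nat \<Rightarrow> nat \<Rightarrow> rat" where
  "lucas_binom P Q n k =
     (\<Prod>i\<in>{n-k+1..n}. of_int (lucasU P Q i)) / (\<Prod>i\<in>{1..k}. of_int (lucasU P Q i))"

definition lucas_lcm_binom :: "int \<Rightarrow> int \<Rightarrow> nat \<Rightarrow> nat \<Rightarrow> rat" where
  "lucas_lcm_binom P Q n k =
     of_int (Lcm (lucasU P Q ` {n-k+1..n})) / of_int (Lcm (lucasU P Q ` {1..k}))"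

end

theory Submission
  imports Defs "HOL-Computational_Algebra.Primes"
begin

(* For coprime P and Q the sequence U is a strong divisibility sequence: for every d, the
   indices m with d dvd U m are exactly the multiples of a rank r(d).  Any k consecutive
   integers contain at least as many multiples of r(d) as 1, ..., k, so at least as many of
   U (n-k+1), ..., U n as of U 1, ..., U k are divisible by d.  For a prime p, the p-adic
   valuation of a product of nonzero terms divided by their lcm is the sum over e >= 1 of
   N(p^e) - [N(p^e) > 0], where N(q) counts the terms divisible by q; this is monotone in N,
   which gives both divisibilities.  The root-of-unity hypothesis only serves to make
   U m nonzero for m > 0. *)

lemma card_multiples_le_consecutive:
  fixes r k a :: nat
  shows "card {i \<in> {1..k}. r dvd i} \<le> card {m \<in> {a + 1..a + k}. r dvd m}"
proof (rule card_inj_on_le)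
  let ?shift = "\<lambda>i. i + r * (a div r)"
  show "inj_on ?shift {i \<in> {1..k}. r dvd i}"
    by (rule inj_onI) simp
  show "?shift ` {i \<in> {1..k}. r dvd i} \<subseteq> {m \<in> {a + 1..a + k}. r dvd m}"
  proof (rule image_subsetI)
    fix i assume "i \<in> {i \<in> {1..k}. r dvd i}"
    then have i: "i \<in> {1..k}" "r dvd i" by auto
    then have "0 < r" "r \<le> i"
      by (auto dest: dvd_imp_le)
    then have "a mod r < i"
      by (meson mod_less_divisor order_less_le_trans)
    then have "a < r * (a div r) + i"
      using mult_div_mod_eq[of r a] by linarith
    moreover have "?shift i \<le> k + a"
      using i(1) by (intro add_mono) (simp_all add: times_div_less_eq_dividend)
    ultimately show "?shift i \<in> {m \<in> {a + 1..a + k}. r dvd m}"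
      using i(2) by auto
  qed
qed simp

lemma multiplicity_eq_card_prime_power_dvd:
  fixes x p :: "'a::factorial_semiring"
  assumes "x \<noteq> 0" "prime p" "multiplicity p x \<le> E"
  shows "multiplicity p x = card {e \<in> {1..E}. p ^ e dvd x}"
proof -
  have "{e \<in> {1..E}. p ^ e dvd x} = {1..multiplicity p x}"
    using assms by (auto simp: power_dvd_iff_le_multiplicity)
  then show ?thesis by simp
qed

lemma prime_power_dvd_Lcm_iff:
  fixes A :: "'a::factorial_semiring_gcd set"
  assumes "finite A" "0 \<notin> A" "prime p" "e > 0"
  shows "p ^ e dvd Lcm A \<longleftrightarrow> (\<exists>a \<in> A. p ^ e dvd a)"
  using assms(1,2)
proof (induction A rule: finite_induct)
  case empty
  then show ?case
    using assms(3,4) by (simp add: is_unit_power_iff prime_elem_not_unit)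
next
  case (insert a A)
  then have "a \<noteq> 0" "Lcm A \<noteq> 0" "lcm a (Lcm A) \<noteq> 0"
    by (auto simp: Lcm_0_iff lcm_eq_0_iff)
  then show ?case
    using insert assms(3) by (simp add: power_dvd_iff_le_multiplicity multiplicity_lcm prime_elem_not_unit le_max_iff_disj)
qed

lemma card_filter_eq_sum_of_bool:
  "finite A \<Longrightarrow> card {x \<in> A. P x} = (\<Sum>x \<in> A. of_bool (P x))"
  by (simp add: Int_def)

lemma sum_card_filter_swap:
  assumes "finite A" "finite B"
  shows "(\<Sum>a \<in> A. card {b \<in> B. R a b}) = (\<Sum>b \<in> B. card {a \<in> A. R a b})"
  unfolding card_filter_eq_sum_of_bool[OF assms(1)] card_filter_eq_sum_of_bool[OF assms(2)]
  by (rule sum.swap)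

lemma multiplicity_Lcm_mult_prod:
  fixes f :: "'b \<Rightarrow> 'a::factorial_semiring_gcd"
  assumes "finite A" "finite B" "0 \<notin> f ` A" "0 \<notin> f ` B" "prime p"
    and bound: "\<And>x. x \<in> A \<union> B \<Longrightarrow> multiplicity p (f x) \<le> E"
  shows "multiplicity p (Lcm (f ` A) * prod f B)
       = (\<Sum>e = 1..E. of_bool (\<exists>a \<in> A. p ^ e dvd f a) + card {b \<in> B. p ^ e dvd f b})"
proof -
  have Lcm_dvd_iff: "p ^ e dvd Lcm (f ` A) \<longleftrightarrow> (\<exists>a \<in> A. p ^ e dvd f a)" if "e > 0" for e
    using prime_power_dvd_Lcm_iff[of "f ` A" p e] assms that by simp
  have "Lcm (f ` A) \<noteq> 0" "prod f B \<noteq> 0"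
    using assms by (auto simp: Lcm_0_iff)
  then have "multiplicity p (Lcm (f ` A) * prod f B)
      = multiplicity p (Lcm (f ` A)) + (\<Sum>b \<in> B. multiplicity p (f b))"
    using assms by (simp add: prime_elem_multiplicity_mult_distrib prime_elem_multiplicity_prod_distrib)
  also have "multiplicity p (Lcm (f ` A)) = card {e \<in> {1..E}. \<exists>a \<in> A. p ^ e dvd f a}"
  proof -
    have "\<not> p ^ Suc E dvd f a" if "a \<in> A" for a
    proof -
      have "f a \<noteq> 0" "multiplicity p (f a) < Suc E"
        using that assms(3) bound by (force, simp add: less_Suc_eq_le)
      then show ?thesis
        using assms(5) by (simp add: power_dvd_iff_le_multiplicity prime_elem_not_unit del: power_Suc)
    qed
    then have "\<not> p ^ Suc E dvd Lcm (f ` A)"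
      using Lcm_dvd_iff[of "Suc E"] by simp
    then have "multiplicity p (Lcm (f ` A)) \<le> E"
      using \<open>Lcm (f ` A) \<noteq> 0\<close> assms(5)
      by (simp add: power_dvd_iff_le_multiplicity prime_elem_not_unit del: power_Suc)
    then have "multiplicity p (Lcm (f ` A)) = card {e \<in> {1..E}. p ^ e dvd Lcm (f ` A)}"
      using \<open>Lcm (f ` A) \<noteq> 0\<close> assms(5) by (rule multiplicity_eq_card_prime_power_dvd[rotated 2])
    also have "{e \<in> {1..E}. p ^ e dvd Lcm (f ` A)} = {e \<in> {1..E}. \<exists>a \<in> A. p ^ e dvd f a}"
      using Lcm_dvd_iff by auto
    finally show ?thesis .
  qed
  also have "(\<Sum>b \<in> B. multiplicity p (f b)) = (\<Sum>b \<in> B. card {e \<in> {1..E}. p ^ e dvd f b})"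
    using assms by (intro sum.cong refl multiplicity_eq_card_prime_power_dvd) auto
  also have "\<dots> = (\<Sum>e = 1..E. card {b \<in> B. p ^ e dvd f b})"
    using assms(2) by (simp add: sum_card_filter_swap)
  finally show ?thesis
    by (simp only: card_filter_eq_sum_of_bool[OF finite_atLeastAtMost] sum.distrib)
qed

lemma Lcm_image_dvd_if_card_le:
  fixes f :: "'b \<Rightarrow> 'a::semiring_Gcd"
  assumes "finite A" and le: "\<And>q. card {a \<in> A. q dvd f a} \<le> card {b \<in> B. q dvd f b}"
  shows "Lcm (f ` A) dvd Lcm (f ` B)"
proof (rule Lcm_least, clarify)
  fix a assume "a \<in> A"
  then have "0 < card {a' \<in> A. f a dvd f a'}"
    using assms(1) by (auto simp: card_gt_0_iff)
  then have "0 < card {b \<in> B. f a dvd f b}"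
    using le[of "f a"] by linarith
  then obtain b where "b \<in> B" "f a dvd f b"
    by (auto simp: card_gt_0_iff)
  then show "f a dvd Lcm (f ` B)"
    by (meson dvd_Lcm dvd_trans image_eqI)
qed

lemma Lcm_mult_prod_dvd_if_card_le:
  fixes f :: "'b \<Rightarrow> 'a::factorial_semiring_gcd"
  assumes "finite A" "finite B" "0 \<notin> f ` A" "0 \<notin> f ` B"
    and le: "\<And>q. card {a \<in> A. q dvd f a} \<le> card {b \<in> B. q dvd f b}"
  shows "Lcm (f ` B) * prod f A dvd Lcm (f ` A) * prod f B"
proof (rule multiplicity_le_imp_dvd)
  show "Lcm (f ` B) * prod f A \<noteq> 0"
    using assms by (auto simp: Lcm_0_iff)
next
  fix p :: 'a assume "prime p"
  define E where "E = (\<Sum>x \<in> A \<union> B. multiplicity p (f x))"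
  have bound: "multiplicity p (f x) \<le> E" if "x \<in> A \<union> B" for x
    unfolding E_def using that assms(1,2) by (intro member_le_sum) auto
  have ex_iff: "(\<exists>x \<in> X. p ^ e dvd f x) \<longleftrightarrow> 0 < card {x \<in> X. p ^ e dvd f x}" if "finite X" for X e
    using that by (auto simp: card_gt_0_iff)
  have termwise: "of_bool (\<exists>b \<in> B. p ^ e dvd f b) + card {a \<in> A. p ^ e dvd f a}
      \<le> of_bool (\<exists>a \<in> A. p ^ e dvd f a) + card {b \<in> B. p ^ e dvd f b}" for e
    using le[of "p ^ e"] ex_iff[OF assms(1), of e] ex_iff[OF assms(2), of e] by auto
  have "multiplicity p (Lcm (f ` B) * prod f A)
      = (\<Sum>e = 1..E. of_bool (\<exists>b \<in> B. p ^ e dvd f b) + card {a \<in> A. p ^ e dvd f a})"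
    using assms \<open>prime p\<close> bound by (intro multiplicity_Lcm_mult_prod) auto
  also have "\<dots> \<le> (\<Sum>e = 1..E. of_bool (\<exists>a \<in> A. p ^ e dvd f a) + card {b \<in> B. p ^ e dvd f b})"
    by (intro sum_mono termwise)
  also have "\<dots> = multiplicity p (Lcm (f ` A) * prod f B)"
    using assms \<open>prime p\<close> bound by (intro multiplicity_Lcm_mult_prod[symmetric]) auto
  finally show "multiplicity p (Lcm (f ` B) * prod f A) \<le> multiplicity p (Lcm (f ` A) * prod f B)" .
qed

lemma Lcm_ratio_dvd_prod_ratio_if_card_le:
  fixes f :: "'b \<Rightarrow> int"
  assumes "finite A" "finite B" "0 \<notin> f ` A" "0 \<notin> f ` B"
    and le: "\<And>q. card {a \<in> A. q dvd f a} \<le> card {b \<in> B. q dvd f b}"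
  obtains c d where "c > 0"
    and "(of_int (Lcm (f ` B)) / of_int (Lcm (f ` A)) :: 'a::field_char_0) = of_int c"
    and "(of_int (prod f B) / of_int (prod f A) :: 'a) = of_int (c * d)"
proof -
  have Lcm_pos: "Lcm (f ` X) > 0" if "finite X" "0 \<notin> f ` X" for X
    using that Lcm_int_greater_eq_0[of "f ` X"] by (simp add: Lcm_0_iff order_less_le)
  obtain c where c: "Lcm (f ` B) = Lcm (f ` A) * c"
    using Lcm_image_dvd_if_card_le[OF assms(1) le] ..
  obtain d where d: "Lcm (f ` A) * prod f B = Lcm (f ` B) * prod f A * d"
    using Lcm_mult_prod_dvd_if_card_le[OF assms] ..
  have "Lcm (f ` A) * prod f B = Lcm (f ` A) * (c * d * prod f A)"
    using c d by (simp only: ac_simps)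
  then have "prod f B = c * d * prod f A"
    using Lcm_pos[OF assms(1,3)] by simp
  moreover have "prod f A \<noteq> 0"
    using assms(1,3) by auto
  moreover have "c > 0"
    using c Lcm_pos[OF assms(1,3)] Lcm_pos[OF assms(2,4)] by (simp add: zero_less_mult_iff)
  ultimately show ?thesis
    using c Lcm_pos[OF assms(1,3)] by (intro that[of c d]) (simp_all del: of_int_prod)
qed

lemma lucasU_add:
  "lucasU P Q (m + n + 1) = lucasU P Q (m + 1) * lucasU P Q (n + 1) - Q * lucasU P Q m * lucasU P Q n"
proof (induction m arbitrary: n)
  case 0
  then show ?case by simp
next
  case (Suc m)
  have "lucasU P Q (Suc m + n + 1) = lucasU P Q (m + (n + 1) + 1)"
    by simp
  also have "\<dots> = lucasU P Q (m + 1) * lucasU P Q (n + 2) - Q * lucasU P Q m * lucasU P Q (n + 1)"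
    by (simp only: Suc.IH) simp
  also have "\<dots> = lucasU P Q (Suc m + 1) * lucasU P Q (n + 1) - Q * lucasU P Q (Suc m) * lucasU P Q n"
    by (simp add: numeral_2_eq_2 algebra_simps)
  finally show ?case .
qed

lemma lucasU_binet:
  fixes a b :: "'a::comm_ring_1"
  assumes "a + b = of_int P" "a * b = of_int Q"
  shows "of_int (lucasU P Q n) * (a - b) = a ^ n - b ^ n"
  using assms
proof (induction P Q n rule: lucasU.induct)
  case (3 P Q n)
  have "of_int (lucasU P Q (Suc (Suc n))) * (a - b)
      = of_int P * (of_int (lucasU P Q (Suc n)) * (a - b)) - of_int Q * (of_int (lucasU P Q n) * (a - b))"
    by (simp add: algebra_simps)
  also have "\<dots> = (a + b) * (a ^ Suc n - b ^ Suc n) - a * b * (a ^ n - b ^ n)"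
    using 3 by simp
  also have "\<dots> = a ^ Suc (Suc n) - b ^ Suc (Suc n)"
    by (simp add: algebra_simps)
  finally show ?case .
qed simp_all

lemma lucasU_dvd_mult: "lucasU P Q m dvd lucasU P Q (m * j)"
proof (induction j)
  case (Suc j)
  show ?case
  proof (cases m)
    case (Suc m')
    have "lucasU P Q (m * Suc j) = lucasU P Q (m * j + m' + 1)"
      using Suc by (simp add: algebra_simps)
    also have "\<dots> = lucasU P Q (m * j + 1) * lucasU P Q (m' + 1) - Q * lucasU P Q (m * j) * lucasU P Q m'"
      by (rule lucasU_add)
    finally show ?thesis
      using Suc.IH \<open>m = Suc m'\<close> by (simp del: lucasU.simps)
  qed simp
qed simp

lemma coprime_lucasU_Q:
  assumes "coprime P Q"
  shows "coprime (lucasU P Q (Suc n)) Q"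
proof (induction n)
  case (Suc n)
  have "gcd Q (lucasU P Q (Suc (Suc n))) = gcd Q (- lucasU P Q n * Q + P * lucasU P Q (Suc n))"
    by (simp add: mult.commute)
  also have "\<dots> = gcd Q (P * lucasU P Q (Suc n))"
    by (rule gcd_add_mult)
  finally show ?case
    using Suc assms by (simp add: coprime_iff_gcd_eq_1[symmetric] coprime_commute)
qed simp

lemma coprime_lucasU_Suc:
  assumes "coprime P Q"
  shows "coprime (lucasU P Q n) (lucasU P Q (Suc n))"
proof (induction n)
  case (Suc n)
  have "gcd (lucasU P Q (Suc n)) (lucasU P Q (Suc (Suc n)))
      = gcd (lucasU P Q (Suc n)) (P * lucasU P Q (Suc n) + - Q * lucasU P Q n)"
    by simp
  also have "\<dots> = gcd (lucasU P Q (Suc n)) (- Q * lucasU P Q n)"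
    by (rule gcd_add_mult)
  finally show ?case
    using Suc coprime_lucasU_Q[OF assms, of n]
    by (simp add: coprime_iff_gcd_eq_1[symmetric] coprime_commute)
qed simp

lemma lucasU_dvd_cancel:
  assumes "coprime P Q" "d dvd lucasU P Q (a + b)" "d dvd lucasU P Q b"
  shows "d dvd lucasU P Q a"
proof (cases a)
  case (Suc a')
  have "lucasU P Q (a + b) = lucasU P Q a * lucasU P Q (Suc b) - Q * lucasU P Q a' * lucasU P Q b"
    using lucasU_add[of P Q a' b] Suc by simp
  then have "lucasU P Q a * lucasU P Q (Suc b) = lucasU P Q (a + b) + Q * lucasU P Q a' * lucasU P Q b"
    by simp
  then have "d dvd lucasU P Q a * lucasU P Q (Suc b)"
    using assms(2,3) by simp
  moreover have "coprime d (lucasU P Q (Suc b))"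
    using assms(3) coprime_lucasU_Suc[OF assms(1)] by (rule coprime_divisors[OF _ dvd_refl])
  ultimately show ?thesis
    by (simp add: coprime_dvd_mult_left_iff)
qed simp

lemma lucasU_dvd_gcd:
  assumes "coprime P Q" "d dvd lucasU P Q a" "d dvd lucasU P Q b"
  shows "d dvd lucasU P Q (gcd a b)"
  using assms(2,3)
proof (induction a b rule: gcd_nat_induct)
  case (step m n)
  have "d dvd lucasU P Q (m mod n + n * (m div n))"
    using step.prems(1) by simp
  moreover have "d dvd lucasU P Q (n * (m div n))"
    using step.prems(2) lucasU_dvd_mult by (rule dvd_trans)
  ultimately have "d dvd lucasU P Q (m mod n)"
    by (rule lucasU_dvd_cancel[OF assms(1)])
  then have "d dvd lucasU P Q (gcd n (m mod n))"
    using step.IH step.prems(2) by blast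
  then show ?case
    by (simp only: gcd_red_nat[of m n])
qed simp

lemma lucasU_rank:
  assumes "coprime P Q"
  obtains r where "\<And>m. d dvd lucasU P Q m \<longleftrightarrow> r dvd m"
proof (cases "\<exists>m > 0. d dvd lucasU P Q m")
  case False
  then have "d dvd lucasU P Q m \<longleftrightarrow> 0 dvd m" for m
    by auto
  then show ?thesis by (rule that)
next
  case True
  define r where "r = (LEAST m. m > 0 \<and> d dvd lucasU P Q m)"
  have r: "r > 0" "d dvd lucasU P Q r"
    using LeastI_ex[OF True] unfolding r_def by auto
  have "d dvd lucasU P Q m \<longleftrightarrow> r dvd m" for m
  proof
    assume m: "d dvd lucasU P Q m"
    show "r dvd m"
    proof (cases "m = 0")
      case False
      have "d dvd lucasU P Q (gcd r m)"
        using lucasU_dvd_gcd[OF assms r(2) m] .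
      then have "r \<le> gcd r m"
        using r(1) unfolding r_def by (intro Least_le) simp
      then have "gcd r m = r"
        using r(1) by (intro le_antisym gcd_le1_nat) simp_all
      then show ?thesis
        using gcd_dvd2[of r m] by simp
    qed simp
  next
    assume "r dvd m"
    then obtain j where "m = r * j" ..
    then show "d dvd lucasU P Q m"
      using r(2) lucasU_dvd_mult by (metis dvd_trans)
  qed
  then show ?thesis by (rule that)
qed

lemma lucasU_neq_0:
  fixes \<alpha> \<beta> :: "'a::field"
  assumes "\<alpha> + \<beta> = of_int P" "\<alpha> * \<beta> = of_int Q" "\<beta> \<noteq> 0" "(\<alpha> / \<beta>) ^ n \<noteq> 1"
  shows "lucasU P Q n \<noteq> 0"
proof
  assume "lucasU P Q n = 0"
  then have "\<alpha> ^ n - \<beta> ^ n = 0"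
    using lucasU_binet[OF assms(1,2), of n] by simp
  then have "(\<alpha> / \<beta>) ^ n = 1"
    using assms(3) by (simp add: power_divide)
  then show False
    using assms(4) by contradiction
qed

lemma lucasU_card_dvd_le_window:
  assumes "coprime P Q" "k \<le> n"
  shows "card {i \<in> {1..k}. q dvd lucasU P Q i} \<le> card {m \<in> {n-k+1..n}. q dvd lucasU P Q m}"
proof -
  obtain r where r: "\<And>m. q dvd lucasU P Q m \<longleftrightarrow> r dvd m"
    using lucasU_rank[OF assms(1), where d = q] by blast
  have "n - k + k = n"
    using assms(2) by simp
  then show ?thesis
    using card_multiples_le_consecutive[of k r "n - k"] by (simp only: r)
qed

theorem theorem8:
  fixes P Q :: int and \<alpha> \<beta> :: complex and n k :: nat
  assumes "P \<noteq> 0" and "Q \<noteq> 0" and "coprime P Q"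
    and "P^2 - 4*Q \<noteq> 0"
    and "\<alpha> + \<beta> = of_int P" and "\<alpha> * \<beta> = of_int Q"
    and "\<not> (\<exists>m::nat. m > 0 \<and> (\<alpha> / \<beta>) ^ m = 1)"
    and "k \<ge> 1" and "n \<ge> k"
  shows "\<exists>c::int. c > 0 \<and> lucas_lcm_binom P Q n k = of_int c
           \<and> (\<exists>d::int. lucas_binom P Q n k = of_int (c * d))"
proof -
  have "\<beta> \<noteq> 0"
    using assms(2,6) by auto
  then have "lucasU P Q m \<noteq> 0" if "m > 0" for m
    using lucasU_neq_0[OF assms(5,6), of m] assms(7) that by blast
  then have nonzero: "0 \<notin> lucasU P Q ` {1..k}" "0 \<notin> lucasU P Q ` {n-k+1..n}"
    by force+
  obtain c d where "c > 0"
    and "of_int (Lcm (lucasU P Q ` {n-k+1..n})) / of_int (Lcm (lucasU P Q ` {1..k})) = (of_int c :: rat)"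
    and "of_int (prod (lucasU P Q) {n-k+1..n}) / of_int (prod (lucasU P Q) {1..k}) = (of_int (c * d) :: rat)"
    using Lcm_ratio_dvd_prod_ratio_if_card_le[OF _ _ nonzero lucasU_card_dvd_le_window[OF assms(3,9)]]
    by blast
  then show ?thesis
    unfolding lucas_lcm_binom_def lucas_binom_def of_int_prod [symmetric] by blast
qed

end
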